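(* Let $0<b<a$. There exist $n_0=n_0(a/b)$ and a constant $c(a,b)<\pi$ such that the following holds for every $n>n_0$: if $Q(x)=\sum_{j=0}^n c_jx^j$ is any real polynomial of degree $n$ with $|Q(z_0)|=a^n$ for some $z_0\in[-1,1]$, then $$\big|\{\theta\in(0,\pi):\ |Q(\cos\theta)|<b^n\}\big|\le c(a,b).$$
   Context: $|\cdot|$ denotes Lebesgue measure. *)

theory Defs
  imports "HOL-Analysis.Analysis" "HOL-Computational_Algebra.Polynomial"
begin

end

theory Submission
  imports Defs
begin

text \<open>Suppose the set where \<open>\<bar>Q (cos \<theta>)\<bar> < b ^ n\<close> had measure more than \<open>pi - pi / q\<close> in
  \<open>(0, pi)\<close>. By the symmetry \<open>\<theta> \<mapsto> 2 pi - \<theta>\<close>, the set where \<open>\<bar>Q (cos \<theta>)\<bar> \<ge> b ^ n\<close>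
  would have measure less than \<open>2 pi / q\<close> in \<open>[0, 2 pi)\<close>, so averaging over rotations of
  \<open>M = 2n + 1 + U\<close> equally spaced points on the circle, with \<open>U \<approx> (2n + 1) / (q - 1)\<close>, gives
  a rotated grid with at most \<open>U\<close> points in it. On the unit circle, \<open>z ^ n Q ((z + 1/z) / 2)\<close>
  is a polynomial of degree \<open>2n\<close> of modulus \<open>\<bar>Q (cos \<theta>)\<bar>\<close>, so Lagrange interpolation at
  \<open>2n + 1\<close> of the remaining grid points bounds \<open>\<bar>Q\<bar>\<close> on \<open>[-1, 1]\<close>. Since the grid consists of
  the roots of \<open>z ^ M - c\<close>, the Lagrange basis is at most \<open>(2M) ^ U / U!\<close> on the circle, and for
  \<open>q\<close> large in terms of \<open>a / b\<close> and \<open>n\<close> large the resulting bound is below \<open>a ^ n\<close>.\<close>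

lemma half_le_sin:
  fixes x :: real
  assumes "0 \<le> x" "x \<le> 17/10"
  shows "x / 2 \<le> sin x"
proof -
  have "\<bar>sin x - (\<Sum>m<3. sin_coeff m * x ^ m)\<bar> \<le> inverse (fact 3) * \<bar>x\<bar> ^ 3"
    by (rule Maclaurin_sin_bound)
  moreover have "(\<Sum>m<3. sin_coeff m * x ^ m) = x"
    by (simp add: sin_coeff_def eval_nat_numeral)
  moreover have "inverse (fact 3) * \<bar>x\<bar> ^ 3 = x ^ 3 / 6"
    using assms by (simp add: numeral_3_eq_3 field_simps)
  ultimately have "x - x ^ 3 / 6 \<le> sin x" by linarith
  moreover have "x ^ 3 / 6 \<le> x / 2"
  proof -
    have "x * x \<le> 3" using mult_mono[OF assms(2) assms(2)] assms(1) by simp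
    hence "x * (x * x) \<le> x * 3" using assms(1) by (rule mult_left_mono)
    thus ?thesis by (simp add: power3_eq_cube)
  qed
  ultimately show ?thesis by linarith
qed

lemma abs_half_le_abs_sin:
  fixes x :: real
  assumes "\<bar>x\<bar> \<le> pi / 2"
  shows "\<bar>x\<bar> / 2 \<le> \<bar>sin x\<bar>"
proof -
  have "pi / 2 \<le> 17/10" using pi_approx by simp
  hence "\<bar>x\<bar> \<le> 17/10" using assms by linarith
  then show ?thesis
    using half_le_sin[of x] half_le_sin[of "-x"] by (cases "x \<ge> 0") auto
qed

lemma norm_cis_diff: "norm (cis a - cis b) = 2 * \<bar>sin ((a - b) / 2)\<bar>"
proof -
  have "cis a - cis b = cis b * (exp (\<i> * of_real (a - b)) - 1)"
    by (simp add: cis_conv_exp algebra_simps flip: exp_add)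
  thus ?thesis by (simp only: norm_mult norm_cis dist_exp_i_1)
qed

lemma abs_sin_diff_int_pi: "\<bar>sin (x - of_int m * pi)\<bar> = \<bar>sin x\<bar>"
  by (simp add: sin_diff sin_times_pi_eq_0 mult.commute[of _ pi])

text \<open>Distinct integers other than the one nearest to \<open>u\<close> have distances at least
  \<open>1/2, 2/2, 3/2, \<dots>\<close> from \<open>u\<close> after sorting.\<close>

lemma fact_div_power_le_prod_abs_diff_ints:
  fixes u :: real and B :: "int set"
  assumes "finite B" "b0 \<notin> B" "\<forall>b\<in>B. \<bar>u - of_int b0\<bar> \<le> \<bar>u - of_int b\<bar>"
  shows "fact (card B) / 2 ^ card B \<le> (\<Prod>b\<in>B. \<bar>u - of_int b\<bar>)"
  using assms
proof (induction "card B" arbitrary: B)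
  case 0
  thus ?case by simp
next
  case (Suc n B)
  have "B \<noteq> {}" using Suc.hyps(2) by auto
  then obtain bm where bm: "bm \<in> B" "\<forall>b\<in>B. \<bar>u - of_int b\<bar> \<le> \<bar>u - of_int bm\<bar>"
    using ex_is_arg_min_if_finite[OF Suc.prems(1), of "\<lambda>b. - \<bar>u - of_int b\<bar>"]
    by (auto simp: is_arg_min_linorder)
  define \<rho> where "\<rho> = \<bar>u - of_int bm\<bar>"
  have "insert b0 B \<subseteq> {\<lceil>u - \<rho>\<rceil>..\<lfloor>u + \<rho>\<rfloor>}"
  proof
    fix k assume "k \<in> insert b0 B"
    hence "\<bar>u - of_int k\<bar> \<le> \<rho>" using bm Suc.prems(3) \<rho>_def by (auto intro: order.trans)
    thus "k \<in> {\<lceil>u - \<rho>\<rceil>..\<lfloor>u + \<rho>\<rfloor>}"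
      by (auto simp: abs_le_iff ceiling_le_iff le_floor_iff)
  qed
  hence "card (insert b0 B) \<le> nat (\<lfloor>u + \<rho>\<rfloor> - \<lceil>u - \<rho>\<rceil> + 1)"
    using card_mono[of "{\<lceil>u - \<rho>\<rceil>..\<lfloor>u + \<rho>\<rfloor>}"] by simp
  hence "real (Suc (Suc n)) \<le> real_of_int (\<lfloor>u + \<rho>\<rfloor> - \<lceil>u - \<rho>\<rceil> + 1)"
    using Suc.hyps(2) Suc.prems by (simp add: card_insert_if)
  also have "\<dots> \<le> 2 * \<rho> + 1"
    using of_int_floor_le[of "u + \<rho>"] le_of_int_ceiling[of "u - \<rho>"] by linarith
  finally have \<rho>_ge: "real (Suc n) / 2 \<le> \<rho>" by simp
  have "card (B - {bm}) = n" using Suc.hyps(2) bm by simp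
  hence IH: "fact n / 2 ^ n \<le> (\<Prod>b\<in>B - {bm}. \<bar>u - of_int b\<bar>)"
    using Suc.hyps(1)[of "B - {bm}"] Suc.prems by auto
  have "(\<Prod>b\<in>B. \<bar>u - of_int b\<bar>) = \<rho> * (\<Prod>b\<in>B - {bm}. \<bar>u - of_int b\<bar>)"
    using bm Suc.prems(1) \<rho>_def by (simp add: prod.remove)
  also have "\<dots> \<ge> (real (Suc n) / 2) * (fact n / 2 ^ n)"
    using IH \<rho>_ge by (intro mult_mono) auto
  finally show ?case using Suc.hyps(2)[symmetric] by (simp add: field_simps)
qed

lemma pow_div_fact_le_exp:
  fixes x :: real
  assumes "0 \<le> x"
  shows "x ^ n / fact n \<le> exp x"
proof -
  have "summable (\<lambda>m. x ^ m /\<^sub>R fact m)" using exp_converges[of x] by (rule sums_summable)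
  hence "sum (\<lambda>m. x ^ m /\<^sub>R fact m) {n} \<le> suminf (\<lambda>m. x ^ m /\<^sub>R fact m)"
    by (rule sum_le_suminf) (use assms in auto)
  thus ?thesis by (simp add: exp_def divide_inverse mult.commute)
qed

section \<open>Lagrange interpolation\<close>

lemma lagrange_interpolation:
  fixes p :: "'a::field poly" and x :: "'b \<Rightarrow> 'a"
  assumes "finite S" "inj_on x S" "degree p < card S"
  shows "poly p z = (\<Sum>j\<in>S. poly p (x j) * (\<Prod>k\<in>S - {j}. z - x k) / (\<Prod>k\<in>S - {j}. x j - x k))"
proof -
  define c where "c j = poly p (x j) / (\<Prod>k\<in>S - {j}. x j - x k)" for j
  define q where "q = (\<Sum>j\<in>S. smult (c j) (\<Prod>k\<in>S - {j}. [:- x k, 1:]))"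
  have "degree q \<le> card S - 1" unfolding q_def
  proof (rule degree_sum_le[OF assms(1)])
    fix j assume "j \<in> S"
    have "degree (\<Prod>k\<in>S - {j}. [:- x k, 1:]) \<le> (\<Sum>k\<in>S - {j}. degree [:- x k, 1:])"
      using degree_prod_sum_le[of "S - {j}" "\<lambda>k. [:- x k, 1:]"] assms(1) by simp
    also have "\<dots> = card S - 1" using \<open>j \<in> S\<close> assms(1) by simp
    finally show "degree (smult (c j) (\<Prod>k\<in>S - {j}. [:- x k, 1:])) \<le> card S - 1"
      using degree_smult_le order.trans by blast
  qed
  hence "degree q < card (x ` S)" using assms by (simp add: card_image)
  moreover have "poly p (x i) = poly q (x i)" if i: "i \<in> S" for i
  proof -
    have vanish: "(\<Prod>k\<in>S - {j}. x i - x k) = 0" if "j \<in> S - {i}" for j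
      using that i assms(1) by (intro prod_zero) auto
    have "poly q (x i) = (\<Sum>j\<in>S. c j * (\<Prod>k\<in>S - {j}. x i - x k))"
      by (simp add: q_def poly_sum poly_prod)
    also have "\<dots> = c i * (\<Prod>k\<in>S - {i}. x i - x k) + (\<Sum>j\<in>S - {i}. c j * (\<Prod>k\<in>S - {j}. x i - x k))"
      using i assms(1) by (simp add: sum.remove)
    also have "(\<Sum>j\<in>S - {i}. c j * (\<Prod>k\<in>S - {j}. x i - x k)) = 0"
      by (rule sum.neutral) (simp add: vanish)
    moreover have "(\<Prod>k\<in>S - {i}. x i - x k) \<noteq> 0"
      using assms(1,2) i by (auto simp: inj_on_def)
    ultimately show ?thesis by (simp add: c_def)
  qed
  ultimately have "p = q"
    using assms by (intro poly_eqI_degree[where A = "x ` S"]) (auto simp: card_image)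
  hence "poly p z = poly q z" by simp
  thus ?thesis by (simp add: q_def c_def poly_sum poly_prod)
qed

lemma norm_lagrange_interpolation_le:
  fixes p :: "'a::real_normed_field poly" and x :: "'b \<Rightarrow> 'a" and B C :: real
  assumes "finite S" "inj_on x S" "degree p < card S"
    and node_bound: "\<And>j. j \<in> S \<Longrightarrow> norm (poly p (x j)) \<le> B"
    and ratio_bound: "\<And>j. j \<in> S \<Longrightarrow> (\<Prod>k\<in>S - {j}. norm (z - x k)) \<le> C * (\<Prod>k\<in>S - {j}. norm (x j - x k))"
  shows "norm (poly p z) \<le> real (card S) * B * C"
proof -
  have "norm (poly p (x j) * (\<Prod>k\<in>S - {j}. z - x k) / (\<Prod>k\<in>S - {j}. x j - x k)) \<le> B * C"
    if j: "j \<in> S" for j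
  proof -
    have "0 < (\<Prod>k\<in>S - {j}. norm (x j - x k))"
      using assms(1,2) j by (intro prod_pos) (auto simp: inj_on_def)
    hence "(\<Prod>k\<in>S - {j}. norm (z - x k)) / (\<Prod>k\<in>S - {j}. norm (x j - x k)) \<le> C"
      using ratio_bound[OF j] by (simp add: divide_le_eq)
    moreover have "0 \<le> B" using node_bound[OF j] norm_ge_zero order.trans by blast
    ultimately have "norm (poly p (x j)) * ((\<Prod>k\<in>S - {j}. norm (z - x k)) / (\<Prod>k\<in>S - {j}. norm (x j - x k)))
                     \<le> B * C"
      using node_bound[OF j] by (intro mult_mono) (auto intro!: prod_nonneg divide_nonneg_nonneg)
    thus ?thesis by (simp add: norm_mult norm_divide prod_norm)
  qed
  hence "norm (poly p z) \<le> (\<Sum>j\<in>S. B * C)"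
    unfolding lagrange_interpolation[OF assms(1-3), of z] by (intro sum_norm_le)
  thus ?thesis by simp
qed

section \<open>Rotated roots of unity\<close>

definition rotated_root :: "nat \<Rightarrow> real \<Rightarrow> nat \<Rightarrow> complex" where
  "rotated_root M t k = cis (t + 2 * pi * real k / real M)"

lemma norm_rotated_root [simp]: "norm (rotated_root M t k) = 1"
  by (simp add: rotated_root_def)

lemma rotated_root_pow:
  assumes "M > 0"
  shows "rotated_root M t k ^ M = cis (real M * t)"
proof -
  have "rotated_root M t k ^ M = cis (real M * t + 2 * pi * real k)"
    using assms unfolding rotated_root_def Complex.DeMoivre by (simp add: algebra_simps)
  also have "\<dots> = cis (real M * t) * cis (2 * pi * real k)" by (rule cis_mult[symmetric])
  also have "cis (2 * pi * real k) = 1" by (rule cis_multiple_2pi) simp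
  finally show ?thesis by simp
qed

lemma inj_on_rotated_root:
  assumes "M > 0"
  shows "inj_on (rotated_root M t) {..<M}"
proof (rule inj_onI)
  fix k l assume k: "k \<in> {..<M}" and l: "l \<in> {..<M}"
    and eq: "rotated_root M t k = rotated_root M t l"
  have "cis (t + 2 * pi * real k / real M) / cis (t + 2 * pi * real l / real M) = 1"
    using eq by (simp add: rotated_root_def)
  hence "cis ((t + 2 * pi * real k / real M) - (t + 2 * pi * real l / real M)) = 1"
    by (simp only: cis_divide)
  hence "cos (2 * pi * (real k - real l) / real M) = 1"
    by (simp add: complex_eq_iff diff_divide_distrib right_diff_distrib)
  then obtain m :: int where "2 * pi * (real k - real l) / real M = of_int m * 2 * pi"
    by (auto simp: cos_one_2pi_int)
  hence "pi * (2 * (real k - real l - of_int m * real M)) = 0" using assms by (simp add: field_simps)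
  hence "real k - real l = of_int m * real M" by simp
  hence m: "int k - int l = m * int M" by (metis of_int_eq_iff of_int_mult of_int_of_nat_eq of_int_diff)
  have "\<bar>int k - int l\<bar> < int M" using k l by auto
  hence "\<bar>m\<bar> * int M < 1 * int M" by (simp add: m abs_mult)
  hence "\<bar>m\<bar> < 1" by (simp only: mult_less_cancel_right)
  hence "m = 0" by simp
  thus "k = l" using m by simp
qed

lemma prod_minus_rotated_roots:
  assumes "M > 0"
  shows "(\<Prod>k<M. z - rotated_root M t k) = z ^ M - cis (real M * t)"
proof -
  define p where "p = (\<Prod>k<M. [:- rotated_root M t k, 1:])"
  define q where "q = (monom 1 M - [:cis (real M * t):] :: complex poly)"
  have "p = q"
  proof (rule poly_eqI_degree_lead_coeff[where n = M and A = "rotated_root M t ` {..<M}"])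
    have "degree p = M" unfolding p_def by (subst degree_prod_eq_sum_degree) auto
    moreover have "lead_coeff p = 1" unfolding p_def by (simp add: lead_coeff_prod)
    moreover have "coeff q M = 1" using assms by (cases M) (auto simp: q_def coeff_monom)
    ultimately show "coeff p M = coeff q M" by simp
    show "M \<le> card (rotated_root M t ` {..<M})"
      using card_image[OF inj_on_rotated_root[OF assms]] by simp
    show "degree p \<le> M" by (simp add: p_def degree_prod_eq_sum_degree)
    show "degree q \<le> M" unfolding q_def
      by (intro order.trans[OF degree_diff_le_max]) (auto simp: degree_monom_eq)
    fix z assume "z \<in> rotated_root M t ` {..<M}"
    thus "poly p z = poly q z"
      using rotated_root_pow[OF assms]
      by (auto simp: p_def q_def poly_prod poly_monom intro!: prod_zero)
  qed
  hence "poly p z = poly q z" by simp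
  thus ?thesis by (simp add: p_def q_def poly_prod poly_monom)
qed

lemma prod_minus_rotated_roots_except:
  assumes "M > 0" "j < M"
  shows "(\<Prod>k\<in>{..<M} - {j}. z - rotated_root M t k)
       = (\<Sum>i<M. rotated_root M t j ^ (M - Suc i) * z ^ i)"
proof -
  define w where "w = rotated_root M t j"
  define P1 where "P1 = (\<Prod>k\<in>{..<M} - {j}. [:- rotated_root M t k, 1:])"
  define P2 where "P2 = (\<Sum>i<M. monom (w ^ (M - Suc i)) i)"
  have "poly ([:-w, 1:] * P1) x = poly ([:-w, 1:] * P2) x" for x
  proof -
    have "poly ([:-w, 1:] * P1) x = (x - w) * (\<Prod>k\<in>{..<M} - {j}. x - rotated_root M t k)"
      by (simp add: P1_def poly_prod algebra_simps)
    also have "\<dots> = (\<Prod>k<M. x - rotated_root M t k)"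
      unfolding w_def by (rule prod.remove[symmetric]) (use assms in auto)
    also have "\<dots> = x ^ M - w ^ M"
      using rotated_root_pow[OF assms(1)] prod_minus_rotated_roots[OF assms(1)] by (simp add: w_def)
    also have "\<dots> = (x - w) * (\<Sum>i<M. w ^ (M - Suc i) * x ^ i)" by (rule power_diff_sumr2)
    also have "\<dots> = poly ([:-w, 1:] * P2) x"
      by (simp add: P2_def poly_sum poly_monom algebra_simps)
    finally show ?thesis .
  qed
  hence "[:-w, 1:] * P1 = [:-w, 1:] * P2" by (simp add: fun_eq_iff flip: poly_eq_poly_eq_iff)
  hence "P1 = P2" by (metis mult_left_cancel pCons_eq_0_iff zero_neq_one)
  hence "poly P1 z = poly P2 z" by simp
  thus ?thesis by (simp add: P1_def P2_def poly_prod poly_sum poly_monom w_def)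
qed

lemma norm_prod_minus_rotated_roots_except_le:
  assumes "M > 0" "j < M" "norm z = 1"
  shows "norm (\<Prod>k\<in>{..<M} - {j}. z - rotated_root M t k) \<le> M"
proof -
  have "norm (\<Sum>i<M. rotated_root M t j ^ (M - Suc i) * z ^ i)
      \<le> (\<Sum>i<M. norm (rotated_root M t j ^ (M - Suc i) * z ^ i))"
    by (rule norm_sum)
  also have "\<dots> = M" using assms by (simp add: norm_mult norm_power)
  finally show ?thesis using prod_minus_rotated_roots_except[OF assms(1,2)] by simp
qed

lemma prod_norm_diff_rotated_roots_except:
  assumes "M > 0" "j < M"
  shows "(\<Prod>k\<in>{..<M} - {j}. norm (rotated_root M t j - rotated_root M t k)) = M"
proof -
  define w where "w = rotated_root M t j"
  have "(\<Prod>k\<in>{..<M} - {j}. norm (w - rotated_root M t k)) = norm (\<Sum>i<M. w ^ (M - Suc i) * w ^ i)"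
    using prod_minus_rotated_roots_except[OF assms] by (simp add: prod_norm w_def)
  also have "(\<Sum>i<M. w ^ (M - Suc i) * w ^ i) = (\<Sum>i<M. w ^ (M - 1))"
    by (intro sum.cong refl) (simp add: power_add[symmetric])
  also have "norm \<dots> = M" by (simp add: norm_mult norm_power w_def)
  finally show ?thesis by (simp add: w_def)
qed

text \<open>In the coordinate \<open>grid_coord M t \<theta>\<close> the roots sit at the integers; \<open>grid_lift M t \<theta> k\<close>
  is the representative of \<open>k\<close> modulo \<open>M\<close> nearest to that coordinate.\<close>

definition grid_coord :: "nat \<Rightarrow> real \<Rightarrow> real \<Rightarrow> real" where
  "grid_coord M t \<theta> = (\<theta> - t) * real M / (2 * pi)"

definition grid_lift :: "nat \<Rightarrow> real \<Rightarrow> real \<Rightarrow> nat \<Rightarrow> int" where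
  "grid_lift M t \<theta> k = int k - int M * round ((real k - grid_coord M t \<theta>) / real M)"

lemma grid_lift_close:
  assumes "M > 0"
  shows "\<bar>grid_coord M t \<theta> - of_int (grid_lift M t \<theta> k)\<bar> \<le> real M / 2"
proof -
  define x where "x = (real k - grid_coord M t \<theta>) / real M"
  have "\<bar>grid_coord M t \<theta> - of_int (grid_lift M t \<theta> k)\<bar> = real M * \<bar>of_int (round x) - x\<bar>"
    using assms by (simp add: grid_lift_def x_def field_simps flip: abs_mult)
  also have "\<dots> \<le> real M * (1/2)"
    by (intro mult_left_mono of_int_round_abs_le) auto
  finally show ?thesis by simp
qed

lemma inj_on_grid_lift:
  assumes "M > 0"
  shows "inj_on (grid_lift M t \<theta>) {..<M}"
proof -
  have "grid_lift M t \<theta> k mod int M = int k" if "k < M" for k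
  proof -
    have "grid_lift M t \<theta> k = int k + (- round ((real k - grid_coord M t \<theta>) / real M)) * int M"
      unfolding grid_lift_def by (simp only: mult_minus_left mult.commute[of "int M"] diff_conv_add_uminus)
    hence "grid_lift M t \<theta> k mod int M = int k mod int M" by (simp only: mod_mult_self1)
    thus ?thesis using that by simp
  qed
  thus ?thesis by (intro inj_onI) (metis lessThan_iff of_nat_eq_iff)
qed

lemma norm_cis_minus_rotated_root_ge:
  assumes "M > 0"
  shows "2 * \<bar>grid_coord M t \<theta> - of_int (grid_lift M t \<theta> k)\<bar> / real M
         \<le> norm (cis \<theta> - rotated_root M t k)"
proof -
  define d where "d = grid_coord M t \<theta> - of_int (grid_lift M t \<theta> k)"
  define R where "R = round ((real k - grid_coord M t \<theta>) / real M)"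
  have "real k = of_int (grid_lift M t \<theta> k) + real M * of_int R"
    by (simp add: grid_lift_def R_def)
  hence "(\<theta> - (t + 2 * pi * real k / real M)) / 2 = pi * d / real M - of_int R * pi"
    using assms by (simp add: d_def grid_coord_def field_simps)
  hence eq: "norm (cis \<theta> - rotated_root M t k) = 2 * \<bar>sin (pi * d / real M)\<bar>"
    unfolding rotated_root_def norm_cis_diff by (simp only: abs_sin_diff_int_pi)
  have "\<bar>pi * d / real M\<bar> = pi * \<bar>d\<bar> / real M" by (simp add: abs_mult)
  also have "\<dots> \<le> pi * (real M / 2) / real M"
    using grid_lift_close[OF assms] assms by (intro divide_right_mono mult_left_mono) (auto simp: d_def)
  also have "\<dots> = pi / 2" using assms by simp
  finally have "pi * \<bar>d\<bar> / real M \<le> norm (cis \<theta> - rotated_root M t k)"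
    using abs_half_le_abs_sin[of "pi * d / real M"] eq by (simp add: abs_mult)
  moreover have "2 * \<bar>d\<bar> / real M \<le> pi * \<bar>d\<bar> / real M"
    using pi_gt3 assms by (intro divide_right_mono mult_right_mono) auto
  ultimately show ?thesis by (simp add: d_def)
qed

text \<open>Of any \<open>m + 1\<close> roots, the ones other than the nearest to \<open>cis \<theta>\<close> are at least as far
  from it as the points at chordal distances \<open>2/M, 4/M, \<dots>, 2m/M\<close>.\<close>

lemma ex_prod_norm_cis_minus_rotated_roots_ge:
  assumes "M > 0" "D \<subseteq> {..<M}" "D \<noteq> {}"
  shows "\<exists>d\<in>D. fact (card D - 1) / real M ^ (card D - 1)
                \<le> (\<Prod>k\<in>D - {d}. norm (cis \<theta> - rotated_root M t k))"
proof -
  define u where "u = grid_coord M t \<theta>"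
  define lift where "lift = grid_lift M t \<theta>"
  define m where "m = card D - 1"
  have finD: "finite D" using assms(2) finite_subset by blast
  obtain d where d: "d \<in> D" "\<forall>e\<in>D. \<bar>u - of_int (lift d)\<bar> \<le> \<bar>u - of_int (lift e)\<bar>"
    using ex_is_arg_min_if_finite[OF finD assms(3), of "\<lambda>e. \<bar>u - of_int (lift e)\<bar>"]
    by (auto simp: is_arg_min_linorder)
  have inj: "inj_on lift D"
    using inj_on_grid_lift[OF assms(1)] assms(2) unfolding lift_def by (rule inj_on_subset)
  have card: "card (D - {d}) = m" using d finD by (simp add: m_def)
  have "fact m / 2 ^ m \<le> (\<Prod>b\<in>lift ` (D - {d}). \<bar>u - of_int b\<bar>)"
    using fact_div_power_le_prod_abs_diff_ints[of "lift ` (D - {d})" "lift d" u] finD d inj card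
    by (simp add: card_image inj_on_subset inj_on_image_mem_iff)
  also have "\<dots> = (\<Prod>e\<in>D - {d}. \<bar>u - of_int (lift e)\<bar>)"
    using inj by (simp add: prod.reindex inj_on_subset)
  finally have "(2 / real M) ^ m * (fact m / 2 ^ m)
              \<le> (2 / real M) ^ m * (\<Prod>e\<in>D - {d}. \<bar>u - of_int (lift e)\<bar>)"
    by (rule mult_left_mono) simp
  also have "\<dots> = (\<Prod>e\<in>D - {d}. 2 / real M * \<bar>u - of_int (lift e)\<bar>)"
    by (simp only: prod.distrib prod_constant card)
  also have "\<dots> \<le> (\<Prod>e\<in>D - {d}. norm (cis \<theta> - rotated_root M t e))"
    using norm_cis_minus_rotated_root_ge[OF assms(1)] by (intro prod_mono) (simp add: u_def lift_def)
  finally show ?thesis using d(1) by (auto simp: m_def power_divide)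
qed

lemma prod_norm_cis_minus_rotated_roots_le:
  assumes "M > 0" "T \<subseteq> {..<M}" "Suc (card T + U) = M"
  shows "(\<Prod>k\<in>T. norm (cis \<theta> - rotated_root M t k)) \<le> real M ^ Suc U / fact U"
proof -
  define D where "D = {..<M} - T"
  have finT: "finite T" using assms(2) finite_subset by blast
  have card: "card D = Suc U" using assms finT by (simp add: D_def card_Diff_subset)
  have "D \<subseteq> {..<M}" "D \<noteq> {}" using card by (auto simp only: D_def) auto
  then obtain d where d: "d \<in> D"
    and far: "fact U / real M ^ U \<le> (\<Prod>k\<in>D - {d}. norm (cis \<theta> - rotated_root M t k))"
    using ex_prod_norm_cis_minus_rotated_roots_ge[OF assms(1), of D \<theta> t] card by auto
  have split: "T \<union> (D - {d}) = {..<M} - {d}" using assms(2) d by (auto simp: D_def)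
  have "(\<Prod>k\<in>T. norm (cis \<theta> - rotated_root M t k)) * (\<Prod>k\<in>D - {d}. norm (cis \<theta> - rotated_root M t k))
       = (\<Prod>k\<in>{..<M} - {d}. norm (cis \<theta> - rotated_root M t k))"
    unfolding split[symmetric] using finT by (subst prod.union_disjoint) (auto simp: D_def)
  also have "\<dots> = norm (\<Prod>k\<in>{..<M} - {d}. cis \<theta> - rotated_root M t k)" by (simp add: prod_norm)
  also have "\<dots> \<le> M" using d by (intro norm_prod_minus_rotated_roots_except_le[OF assms(1)]) (auto simp: D_def)
  finally have "(\<Prod>k\<in>T. norm (cis \<theta> - rotated_root M t k)) * (fact U / real M ^ U) \<le> M"
    using far by (smt (verit) mult_left_mono prod_nonneg norm_ge_zero)
  thus ?thesis using assms(1) by (simp add: field_simps)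
qed

lemma prod_norm_diff_rotated_roots_ge:
  assumes "M > 0" "S \<subseteq> {..<M}" "j \<in> S"
  shows "real M / 2 ^ (M - card S) \<le> (\<Prod>k\<in>S - {j}. norm (rotated_root M t j - rotated_root M t k))"
proof -
  define \<omega> where "\<omega> = rotated_root M t"
  have finS: "finite S" using assms(2) finite_subset by blast
  have "j < M" using assms by auto
  have "(S - {j}) \<union> ({..<M} - S) = {..<M} - {j}" "(S - {j}) \<inter> ({..<M} - S) = {}" using assms by auto
  hence "(\<Prod>k\<in>S - {j}. norm (\<omega> j - \<omega> k)) * (\<Prod>k\<in>{..<M} - S. norm (\<omega> j - \<omega> k)) = M"
    using finS prod_norm_diff_rotated_roots_except[OF assms(1) \<open>j < M\<close>, of t]
    by (simp add: \<omega>_def flip: prod.union_disjoint)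
  moreover have "(\<Prod>k\<in>{..<M} - S. norm (\<omega> j - \<omega> k)) \<le> (\<Prod>k\<in>{..<M} - S. 2)"
  proof (rule prod_mono)
    fix k show "0 \<le> norm (\<omega> j - \<omega> k) \<and> norm (\<omega> j - \<omega> k) \<le> 2"
      using norm_triangle_ineq4[of "\<omega> j" "\<omega> k"] by (simp add: \<omega>_def)
  qed
  moreover have "(\<Prod>k\<in>{..<M} - S. 2 :: real) = 2 ^ (M - card S)"
    using finS assms(2) by (simp add: card_Diff_subset)
  ultimately have "real M \<le> (\<Prod>k\<in>S - {j}. norm (\<omega> j - \<omega> k)) * 2 ^ (M - card S)"
    by (metis mult_left_mono prod_nonneg norm_ge_zero)
  thus ?thesis by (simp add: \<omega>_def divide_le_eq)
qed

lemma lagrange_ratio_rotated_roots_le: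
  assumes "M > 0" "S \<subseteq> {..<M}" "j \<in> S"
  shows "(\<Prod>k\<in>S - {j}. norm (cis \<theta> - rotated_root M t k))
         \<le> (2 * real M) ^ (M - card S) / fact (M - card S)
           * (\<Prod>k\<in>S - {j}. norm (rotated_root M t j - rotated_root M t k))"
proof -
  define U where "U = M - card S"
  have finS: "finite S" using assms(2) finite_subset by blast
  have "card S \<le> M" "0 < card S" using card_mono[OF _ assms(2)] finS assms(3) card_gt_0_iff by auto
  moreover have "card (S - {j}) = card S - 1" using assms(3) finS by simp
  ultimately have "Suc (card (S - {j}) + U) = M" unfolding U_def by arith
  hence "(\<Prod>k\<in>S - {j}. norm (cis \<theta> - rotated_root M t k)) \<le> real M ^ Suc U / fact U"
    using assms(2) by (intro prod_norm_cis_minus_rotated_roots_le[OF assms(1)]) auto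
  also have "\<dots> = (2 * real M) ^ U / fact U * (real M / 2 ^ U)"
    by (simp add: power_mult_distrib field_simps)
  also have "\<dots> \<le> (2 * real M) ^ U / fact U * (\<Prod>k\<in>S - {j}. norm (rotated_root M t j - rotated_root M t k))"
    using prod_norm_diff_rotated_roots_ge[OF assms] by (intro mult_left_mono) (auto simp: U_def)
  finally show ?thesis by (simp add: U_def)
qed

section \<open>Averaging over rotations\<close>

lemma nn_integral_indicator_shift:
  fixes B :: "real set"
  assumes "B \<in> sets borel"
  shows "(\<integral>\<^sup>+t. indicator B (t + c) * indicator {0..<h} t \<partial>lborel) = emeasure lborel (B \<inter> {c..<c + h})"
proof -
  have "emeasure lborel (B \<inter> {c..<c + h}) = (\<integral>\<^sup>+x. indicator (B \<inter> {c..<c + h}) x \<partial>lborel)"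
    using assms by simp
  also have "\<dots> = ennreal \<bar>1\<bar> * (\<integral>\<^sup>+x. indicator (B \<inter> {c..<c + h}) (c + 1 * x) \<partial>lborel)"
    by (rule nn_integral_real_affine) (use assms in auto)
  also have "(\<lambda>x. indicator (B \<inter> {c..<c + h}) (c + 1 * x) :: ennreal)
             = (\<lambda>t. indicator B (t + c) * indicator {0..<h} t)"
    by (auto simp: indicator_def add.commute)
  finally show ?thesis by simp
qed

lemma disjoint_family_Ico_multiples:
  fixes h :: real
  assumes "h > 0"
  shows "disjoint_family (\<lambda>k::nat. {real k * h..<real k * h + h})"
proof (unfold disjoint_family_on_def, intro ballI impI)
  fix k l :: nat assume "k \<noteq> l"
  show "{real k * h..<real k * h + h} \<inter> {real l * h..<real l * h + h} = {}"
  proof (rule ccontr)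
    assume "{real k * h..<real k * h + h} \<inter> {real l * h..<real l * h + h} \<noteq> {}"
    hence "h * real k < h * (real l + 1)" "h * real l < h * (real k + 1)"
      by (auto simp: algebra_simps)
    hence "real k < real l + 1" "real l < real k + 1"
      using assms mult_less_cancel_left_pos by blast+
    thus False using \<open>k \<noteq> l\<close> by linarith
  qed
qed

lemma nn_integral_card_translates_le:
  fixes B :: "real set" and h :: real
  assumes [measurable]: "B \<in> sets borel" and "h > 0"
  shows "(\<integral>\<^sup>+t. of_nat (card {k\<in>{..<M}. t + real k * h \<in> B}) * indicator {0..<h} t \<partial>lborel)
         \<le> emeasure lborel B"
proof -
  define I where "I k = {real k * h..<real k * h + h}" for k
  have "of_nat (card {k\<in>{..<M}. t + real k * h \<in> B}) = (\<Sum>k<M. indicator B (t + real k * h) :: ennreal)"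
    for t
  proof -
    have "{k\<in>{..<M}. t + real k * h \<in> B} = {..<M} \<inter> {k. t + real k * h \<in> B}" by auto
    hence "card {k\<in>{..<M}. t + real k * h \<in> B} = (\<Sum>k<M. indicator {k. t + real k * h \<in> B} k :: nat)"
      by (simp add: sum_indicator_eq_card)
    thus ?thesis by (simp add: indicator_def)
  qed
  hence "(\<integral>\<^sup>+t. of_nat (card {k\<in>{..<M}. t + real k * h \<in> B}) * indicator {0..<h} t \<partial>lborel)
         = (\<integral>\<^sup>+t. (\<Sum>k<M. indicator B (t + real k * h) * indicator {0..<h} t) \<partial>lborel)"
    by (simp only: sum_distrib_right)
  also have "\<dots> = (\<Sum>k<M. \<integral>\<^sup>+t. indicator B (t + real k * h) * indicator {0..<h} t \<partial>lborel)"
    by (rule nn_integral_sum) measurable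
  also have "\<dots> = (\<Sum>k<M. emeasure lborel (B \<inter> I k))"
    by (simp only: nn_integral_indicator_shift[OF assms(1)] I_def)
  also have "\<dots> = emeasure lborel (\<Union>k<M. B \<inter> I k)"
  proof (rule sum_emeasure)
    show "disjoint_family_on (\<lambda>k. B \<inter> I k) {..<M}"
      using disjoint_family_Ico_multiples[OF \<open>h > 0\<close>] unfolding I_def disjoint_family_on_def by blast
  qed (auto simp: I_def)
  also have "\<dots> \<le> emeasure lborel B" by (rule emeasure_mono) auto
  finally show ?thesis .
qed

lemma ex_translate_card_le:
  fixes B :: "real set" and h :: real
  assumes "B \<in> sets borel" "h > 0" "emeasure lborel B < ennreal ((real K + 1) * h)"
  shows "\<exists>t. 0 \<le> t \<and> t < h \<and> card {k\<in>{..<M}. t + real k * h \<in> B} \<le> K"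
proof (rule ccontr)
  assume few: "\<not> ?thesis"
  have "ennreal (real K + 1) * indicator {0..<h} t
         \<le> of_nat (card {k\<in>{..<M}. t + real k * h \<in> B}) * indicator {0..<h} t" for t
  proof (cases "0 \<le> t \<and> t < h")
    case True
    hence "of_nat (Suc K) \<le> (of_nat (card {k\<in>{..<M}. t + real k * h \<in> B}) :: ennreal)"
      using few by (intro of_nat_mono) auto
    thus ?thesis using True by (simp add: ennreal_of_nat_eq_real_of_nat add.commute)
  qed simp
  hence "(\<integral>\<^sup>+t. ennreal (real K + 1) * indicator {0..<h} t \<partial>lborel)
         \<le> (\<integral>\<^sup>+t. of_nat (card {k\<in>{..<M}. t + real k * h \<in> B}) * indicator {0..<h} t \<partial>lborel)"
    by (rule nn_integral_mono)
  also have "\<dots> \<le> emeasure lborel B" by (rule nn_integral_card_translates_le[OF assms(1,2)])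
  also have "(\<integral>\<^sup>+t. ennreal (real K + 1) * indicator {0..<h} t \<partial>lborel) = ennreal ((real K + 1) * h)"
    using assms(2) by (simp add: nn_integral_cmult_indicator ennreal_mult)
  finally show False using assms(3) by simp
qed

lemma borel_measurable_poly [measurable]:
  "poly p \<in> borel_measurable (borel :: 'a::{real_normed_field, second_countable_topology} measure)"
  by (intro borel_measurable_continuous_onI continuous_intros)

lemma fmeasurable_subset_Icc:
  fixes A :: "real set"
  shows "A \<in> sets borel \<Longrightarrow> A \<subseteq> {a..b} \<Longrightarrow> A \<in> fmeasurable lborel"
  by (rule fmeasurableI2[OF fmeasurable_compact[OF compact_Icc]]) auto

lemma emeasure_lebesgue_reflect_cos:
  "emeasure lebesgue {\<theta>\<in>{pi<..<2*pi}. P (cos \<theta>)} = emeasure lebesgue {\<theta>\<in>{0<..<pi}. P (cos \<theta>)}"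
proof -
  have cos_reflect: "cos (2 * pi - x) = cos x" for x by (simp add: cos_diff)
  have "{\<theta>\<in>{pi<..<2*pi}. P (cos \<theta>)} = (\<lambda>x. (-1) *\<^sub>R x + 2 * pi) ` {\<theta>\<in>{0<..<pi}. P (cos \<theta>)}"
  proof (intro set_eqI iffI)
    fix \<phi> assume "\<phi> \<in> {\<theta>\<in>{pi<..<2*pi}. P (cos \<theta>)}"
    hence "2 * pi - \<phi> \<in> {\<theta>\<in>{0<..<pi}. P (cos \<theta>)}" by (simp add: cos_reflect)
    thus "\<phi> \<in> (\<lambda>x. (-1) *\<^sub>R x + 2 * pi) ` {\<theta>\<in>{0<..<pi}. P (cos \<theta>)}"
      by (intro image_eqI[of _ _ "2 * pi - \<phi>"]) auto
  next
    fix \<phi> assume "\<phi> \<in> (\<lambda>x. (-1) *\<^sub>R x + 2 * pi) ` {\<theta>\<in>{0<..<pi}. P (cos \<theta>)}"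
    then obtain x where "x \<in> {\<theta>\<in>{0<..<pi}. P (cos \<theta>)}" "\<phi> = 2 * pi - x" by auto
    thus "\<phi> \<in> {\<theta>\<in>{pi<..<2*pi}. P (cos \<theta>)}" by (simp add: cos_reflect)
  qed
  thus ?thesis using emeasure_lebesgue_affine[of "-1" "2 * pi"] by simp
qed

lemma measure_cos_sublevel_le:
  fixes f :: "real \<Rightarrow> real"
  assumes [measurable]: "f \<in> borel_measurable borel"
  shows "measure lborel {\<theta>\<in>{0<..<pi}. f (cos \<theta>) < y}
         \<le> pi - measure lborel {\<phi>\<in>{0..<2*pi}. y \<le> f (cos \<phi>)} / 2"
proof -
  define E where "E = {\<theta>\<in>{0<..<pi}. f (cos \<theta>) < y}"
  define H where "H = {\<theta>\<in>{0<..<pi}. y \<le> f (cos \<theta>)}"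
  define H' where "H' = {\<theta>\<in>{pi<..<2*pi}. y \<le> f (cos \<theta>)}"
  define L where "L = {\<phi>\<in>{0..<2*pi}. y \<le> f (cos \<phi>)}"
  have [measurable]: "E \<in> sets borel" "H \<in> sets borel" "H' \<in> sets borel" "L \<in> sets borel"
    unfolding E_def H_def H'_def L_def by measurable
  have fin: "A \<in> fmeasurable lborel" if "A \<in> sets borel" "A \<subseteq> {0..2*pi}" for A
    using that by (rule fmeasurable_subset_Icc)
  have "E \<subseteq> {0..2*pi}" "H \<subseteq> {0..2*pi}" by (auto simp: E_def H_def)
  hence "emeasure lborel E \<noteq> \<infinity>" "emeasure lborel H \<noteq> \<infinity>"
    using fin[of E] fin[of H] by (simp_all add: fmeasurableD2)
  moreover have "E \<union> H = {0<..<pi}" "E \<inter> H = {}" by (auto simp: E_def H_def)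
  ultimately have "measure lborel E + measure lborel H = pi"
    using measure_Union[of lborel E H] by simp
  moreover have "emeasure lborel H' = emeasure lborel H"
    using emeasure_lebesgue_reflect_cos[of "\<lambda>x. y \<le> f x"] \<open>H \<in> sets borel\<close> \<open>H' \<in> sets borel\<close>
    by (simp add: H_def H'_def)
  hence "measure lborel H' = measure lborel H" by (simp add: measure_def)
  moreover have "measure lborel L \<le> measure lborel H + measure lborel H'"
  proof -
    have "L \<subseteq> (H \<union> H') \<union> {0, pi}"
    proof
      fix \<phi> assume "\<phi> \<in> L"
      thus "\<phi> \<in> (H \<union> H') \<union> {0, pi}"
        by (cases "\<phi> = 0 \<or> \<phi> = pi") (auto simp: L_def H_def H'_def)
    qed
    hence "measure lborel L \<le> measure lborel ((H \<union> H') \<union> {0, pi})"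
      by (intro measure_mono_fmeasurable fin) (auto simp: H_def H'_def)
    also have "\<dots> \<le> measure lborel H + measure lborel H' + measure lborel {0, pi :: real}"
      using measure_Un_le[of H lborel H'] measure_Un_le[of "H \<union> H'" lborel "{0, pi}"] by simp
    also have "measure lborel {0, pi :: real} = 0"
      by (simp add: measure_def emeasure_lborel_countable)
    finally show ?thesis by simp
  qed
  ultimately show ?thesis by (simp add: E_def L_def)
qed

lemma ex_rotated_grid_avoiding:
  fixes L :: "real set" and m U :: nat
  assumes "L \<in> sets borel" "L \<subseteq> {0..2*pi}" "m > 0"
    and "measure lborel L < (real U + 1) * (2 * pi / real (m + U))"
  obtains t S where "S \<subseteq> {..<m + U}" "card S = m"
    "\<And>k. k \<in> S \<Longrightarrow> t + 2 * pi * real k / real (m + U) \<in> {0..<2*pi} - L"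
proof -
  define M where "M = m + U"
  define h where "h = 2 * pi / real M"
  have "M > 0" "h > 0" using assms(3) by (simp_all add: M_def h_def)
  have "measure lborel L < (real U + 1) * h" using assms(4) by (simp add: h_def M_def)
  moreover have "0 < (real U + 1) * h" using \<open>h > 0\<close> by simp
  ultimately have "emeasure lborel L < ennreal ((real U + 1) * h)"
    using fmeasurable_subset_Icc[OF assms(1,2)] by (simp add: emeasure_eq_measure2 ennreal_lessI)
  then obtain t where t: "0 \<le> t" "t < h" and few: "card {k\<in>{..<M}. t + real k * h \<in> L} \<le> U"
    using ex_translate_card_le[OF assms(1) \<open>h > 0\<close>, of U M] by auto
  have "card ({..<M} - {k\<in>{..<M}. t + real k * h \<in> L}) = M - card {k\<in>{..<M}. t + real k * h \<in> L}"
    by (subst card_Diff_subset) auto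
  hence "m \<le> card ({..<M} - {k\<in>{..<M}. t + real k * h \<in> L})" using few by (simp add: M_def)
  then obtain S where S: "S \<subseteq> {..<M} - {k\<in>{..<M}. t + real k * h \<in> L}" "card S = m"
    by (meson obtain_subset_with_card_n)
  have good: "t + 2 * pi * real k / real M \<in> {0..<2*pi} - L" if "k \<in> S" for k
  proof -
    have "k < M" "t + real k * h \<notin> L" using S(1) that by auto
    have "(real k + 1) * h \<le> real M * h" using \<open>k < M\<close> \<open>h > 0\<close> by (intro mult_right_mono) auto
    moreover have "real M * h = 2 * pi" using \<open>M > 0\<close> by (simp add: h_def)
    moreover have "real k * h = 2 * pi * real k / real M" by (simp add: h_def)
    ultimately show ?thesis using t \<open>t + real k * h \<notin> L\<close> by (simp add: distrib_right)
  qed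
  have "S \<subseteq> {..<m + U}" using S(1) by (auto simp: M_def)
  thus thesis using that S(2) good[unfolded M_def] by blast
qed

section \<open>The interpolation bound\<close>

text \<open>\<open>z ^ n * Q ((z + 1/z) / 2)\<close>, expanded so that it is visibly a polynomial.\<close>

definition circle_poly :: "real poly \<Rightarrow> nat \<Rightarrow> complex poly" where
  "circle_poly Q n = (\<Sum>j\<le>n. smult (of_real (coeff Q j)) ([:1/2, 0, 1/2:] ^ j * monom 1 (n - j)))"

lemma degree_circle_poly_le: "degree (circle_poly Q n) \<le> 2 * n"
  unfolding circle_poly_def
proof (rule degree_sum_le)
  fix j assume j: "j \<in> {..n}"
  have "degree (smult (complex_of_real (coeff Q j)) ([:1/2, 0, 1/2:] ^ j * monom 1 (n - j)))
        \<le> degree ([:1/2, 0, 1/2:] ^ j * monom (1::complex) (n - j))"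
    by (rule degree_smult_le)
  also have "\<dots> \<le> degree ([:1/2, 0, 1/2:] ^ j :: complex poly) + degree (monom (1::complex) (n - j))"
    by (rule degree_mult_le)
  also have "\<dots> \<le> 2 * j + (n - j)"
    using degree_power_le[of "[:1/2, 0, 1/2:] :: complex poly" j] degree_monom_le[of "1::complex" "n - j"]
    by simp
  finally show "degree (smult (complex_of_real (coeff Q j)) ([:1/2, 0, 1/2:] ^ j * monom 1 (n - j))) \<le> 2 * n"
    using j by simp
qed simp

lemma poly_circle_poly_cis:
  assumes "degree Q \<le> n"
  shows "poly (circle_poly Q n) (cis \<theta>) = cis \<theta> ^ n * of_real (poly Q (cos \<theta>))"
proof -
  define w where "w = cis \<theta>"
  have "cos (\<theta> * 2) = 2 * cos \<theta> * cos \<theta> - 1"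
    using cos_double_cos[of \<theta>] by (simp add: mult.commute power2_eq_square)
  hence half: "1/2 + w * w / 2 = w * of_real (cos \<theta>)"
    by (simp add: w_def complex_eq_iff power2_eq_square field_simps flip: cos_add sin_add)
  have "poly (circle_poly Q n) w = (\<Sum>j\<le>n. of_real (coeff Q j) * ((1/2 + w * w / 2) ^ j * w ^ (n - j)))"
    by (simp add: circle_poly_def poly_sum poly_monom)
  also have "\<dots> = (\<Sum>j\<le>n. w ^ n * of_real (coeff Q j * cos \<theta> ^ j))"
  proof (rule sum.cong[OF refl])
    fix j assume "j \<in> {..n}"
    hence "(1/2 + w * w / 2) ^ j * w ^ (n - j) = w ^ n * of_real (cos \<theta>) ^ j"
      by (simp add: half power_mult_distrib power_add[symmetric] mult_ac)
    thus "of_real (coeff Q j) * ((1/2 + w * w / 2) ^ j * w ^ (n - j))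
          = w ^ n * of_real (coeff Q j * cos \<theta> ^ j)" by simp
  qed
  also have "\<dots> = w ^ n * of_real (\<Sum>j\<le>n. coeff Q j * cos \<theta> ^ j)"
    by (simp add: sum_distrib_left)
  also have "(\<Sum>j\<le>n. coeff Q j * cos \<theta> ^ j) = poly Q (cos \<theta>)"
  proof -
    have "(\<Sum>j\<le>n. coeff Q j * cos \<theta> ^ j) = (\<Sum>j\<le>degree Q. coeff Q j * cos \<theta> ^ j)"
      by (rule sum.mono_neutral_right) (use assms in \<open>auto simp: coeff_eq_0\<close>)
    thus ?thesis by (simp add: poly_altdef)
  qed
  finally show ?thesis by (simp add: w_def)
qed

lemma norm_poly_circle_poly_cis:
  assumes "degree Q \<le> n"
  shows "norm (poly (circle_poly Q n) (cis \<theta>)) = \<bar>poly Q (cos \<theta>)\<bar>"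
  using poly_circle_poly_cis[OF assms] by (simp add: norm_mult norm_power)

text \<open>With \<open>M = 2n + 1 + U\<close> grid points, interpolation at \<open>2n + 1\<close> of them loses the number of
  nodes times the bound \<open>(2M) ^ U / U!\<close> on the Lagrange basis.\<close>

definition interpolation_loss :: "nat \<Rightarrow> nat \<Rightarrow> real" where
  "interpolation_loss n U = real (2 * n + 1) * (2 * real (2 * n + 1 + U)) ^ U / fact U"

lemma abs_poly_le_interpolation_loss:
  fixes Q :: "real poly"
  assumes "degree Q \<le> n"
    and "measure lborel {\<phi>\<in>{0..<2*pi}. y \<le> \<bar>poly Q (cos \<phi>)\<bar>}
         < (real U + 1) * (2 * pi / real (2 * n + 1 + U))"
    and "x \<in> {-1..1}"
  shows "\<bar>poly Q x\<bar> \<le> interpolation_loss n U * y"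
proof -
  define M where "M = 2 * n + 1 + U"
  define L where "L = {\<phi>\<in>{0..<2*pi}. y \<le> \<bar>poly Q (cos \<phi>)\<bar>}"
  have "M > 0" by (simp add: M_def)
  have "L \<in> sets borel" unfolding L_def by measurable
  moreover have "L \<subseteq> {0..2*pi}" "0 < 2 * n + 1" by (auto simp: L_def)
  moreover have "measure lborel L < (real U + 1) * (2 * pi / real M)"
    using assms(2) by (simp only: L_def M_def)
  ultimately obtain t S where S: "S \<subseteq> {..<M}" "card S = 2 * n + 1"
    and good: "\<And>k. k \<in> S \<Longrightarrow> t + 2 * pi * real k / real M \<in> {0..<2*pi} - L"
    by (rule ex_rotated_grid_avoiding[of L "2 * n + 1" U, folded M_def]) blast
  have node: "norm (poly (circle_poly Q n) (rotated_root M t k)) \<le> y" if "k \<in> S" for k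
    using good[OF that] norm_poly_circle_poly_cis[OF assms(1)] by (auto simp: L_def rotated_root_def)
  have "norm (poly (circle_poly Q n) (cis (arccos x)))
        \<le> real (card S) * y * ((2 * real M) ^ (M - card S) / fact (M - card S))"
  proof (rule norm_lagrange_interpolation_le)
    show "finite S" using S(1) finite_subset by blast
    show "inj_on (rotated_root M t) S" using inj_on_rotated_root[OF \<open>M > 0\<close>] S(1) by (rule inj_on_subset)
    show "degree (circle_poly Q n) < card S" using degree_circle_poly_le[of Q n] S(2) by simp
  qed (use node lagrange_ratio_rotated_roots_le[OF \<open>M > 0\<close> S(1)] in auto)
  moreover have "norm (poly (circle_poly Q n) (cis (arccos x))) = \<bar>poly Q x\<bar>"
    using norm_poly_circle_poly_cis[OF assms(1)] assms(3) by simp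
  moreover have "M - card S = U" by (simp add: S(2) M_def)
  ultimately show ?thesis by (simp add: interpolation_loss_def S(2) M_def mult_ac)
qed

section \<open>Choice of the constants\<close>

lemma double_plus_one_lt_exp:
  fixes L :: real
  assumes "L > 0" "48 < real n * L ^ 2"
  shows "real (2 * n + 1) < exp (real n * L / 2)"
proof -
  have "real n \<ge> 1" using assms(2) by (cases n) auto
  have "real n * (real n * L ^ 2) / 8 = (real n * L / 2) ^ 2 / fact 2"
    by (simp add: power_mult_distrib power2_eq_square)
  also have "\<dots> \<le> exp (real n * L / 2)"
    using assms(1) by (intro pow_div_fact_le_exp) auto
  finally have "real n * (real n * L ^ 2) / 8 \<le> exp (real n * L / 2)" .
  moreover have "real n * 48 < real n * (real n * L ^ 2)"
    using assms(2) \<open>real n \<ge> 1\<close> by (intro mult_strict_left_mono) auto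
  ultimately show ?thesis using \<open>real n \<ge> 1\<close> by (simp only: of_nat_Suc of_nat_mult of_nat_numeral)
qed

text \<open>Write \<open>(2M) ^ U / U! = (2/\<mu>) ^ U * (\<mu>M) ^ U / U! \<le> (2/\<mu>) ^ U * exp (\<mu>M)\<close> with
  \<open>\<mu> = L/24\<close>: since \<open>M \<le> 4n\<close> the exponential is at most \<open>exp (nL/6)\<close>, and since
  \<open>U \<le> (2n + 1) / (q - 1)\<close> the hypothesis on \<open>q\<close> bounds \<open>(2/\<mu>) ^ U\<close> by \<open>exp (nL/4)\<close>.\<close>

lemma grid_factor_le_exp:
  fixes L :: real
  assumes "L > 0" "n \<ge> 1" "q \<ge> 4" "12 * max 0 (ln (48 / L)) \<le> (real q - 1) * L"
    and "U * (q - 1) \<le> 2 * n + 1"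
  shows "(2 * real (2 * n + 1 + U)) ^ U / fact U \<le> exp (real n * L / 2)"
proof -
  define M where "M = 2 * n + 1 + U"
  have "real (U * (q - 1)) \<le> real (2 * n + 1)" using assms(5) by (simp only: of_nat_le_iff)
  hence "real U * (real q - 1) \<le> real (2 * n + 1)" using assms(3) by (simp add: of_nat_diff)
  moreover have "real U * 3 \<le> real U * (real q - 1)" using assms(3) by (intro mult_left_mono) auto
  ultimately have "real M \<le> 4 * real n" using assms(2) by (simp add: M_def)
  have "real U * (12 * ln (48 / L)) \<le> real U * ((real q - 1) * L)"
    using assms(4) by (intro mult_left_mono) auto
  also have "\<dots> \<le> real (2 * n + 1) * L"
    using \<open>real U * (real q - 1) \<le> real (2 * n + 1)\<close> assms(1) by (simp add: mult.assoc[symmetric])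
  finally have "12 * (real U * ln (48 / L)) \<le> 2 * (real n * L) + L" by (simp add: algebra_simps)
  moreover have "L \<le> real n * L" using assms(1,2) by simp
  ultimately have "real U * ln (48 / L) \<le> real n * L / 4" by linarith
  moreover have "L / 24 * real M \<le> L / 24 * (4 * real n)"
    using assms(1) \<open>real M \<le> 4 * real n\<close> by (intro mult_left_mono) auto
  moreover have "L / 24 * (4 * real n) = real n * L / 6" "0 \<le> real n * L" using assms(1) by simp_all
  ultimately have "real U * ln (48 / L) + L / 24 * real M \<le> real n * L / 2" by linarith
  have "2 * real M = 48 / L * (L / 24 * real M)" using assms(1) by simp
  hence "(2 * real M) ^ U / fact U = (48 / L) ^ U * ((L / 24 * real M) ^ U / fact U)"
    by (simp only: power_mult_distrib times_divide_eq_right)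
  also have "\<dots> \<le> (48 / L) ^ U * exp (L / 24 * real M)"
    using assms(1) by (intro mult_left_mono pow_div_fact_le_exp) auto
  also have "\<dots> = exp (real U * ln (48 / L) + L / 24 * real M)"
    using assms(1) by (simp add: exp_add exp_of_nat_mult)
  also have "\<dots> \<le> exp (real n * L / 2)"
    using \<open>real U * ln (48 / L) + L / 24 * real M \<le> real n * L / 2\<close> by simp
  finally show ?thesis by (simp add: M_def)
qed

definition oversampling :: "real \<Rightarrow> nat" where
  "oversampling r = nat \<lceil>12 * max 0 (ln (48 / ln r)) / ln r\<rceil> + 4"

lemma oversampling_ge_four: "oversampling r \<ge> 4"
  by (simp add: oversampling_def)

lemma interpolation_loss_lt_pow:
  assumes "r > 1" "48 < real n * (ln r) ^ 2" "U = (2 * n + 1) div (oversampling r - 1)"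
  shows "interpolation_loss n U < r ^ n"
proof -
  define L where "L = ln r"
  define q where "q = oversampling r"
  have "L > 0" using assms(1) by (simp add: L_def)
  have "n \<ge> 1" using assms(2) by (cases n) auto
  have "12 * max 0 (ln (48 / L)) / L \<le> real q - 1"
    unfolding q_def oversampling_def L_def by linarith
  hence "12 * max 0 (ln (48 / L)) \<le> (real q - 1) * L" using \<open>L > 0\<close> by (simp add: field_simps)
  moreover have "U * (q - 1) \<le> 2 * n + 1" by (simp add: assms(3) q_def)
  moreover have "q \<ge> 4" using oversampling_ge_four by (simp add: q_def)
  ultimately have "(2 * real (2 * n + 1 + U)) ^ U / fact U \<le> exp (real n * L / 2)"
    using grid_factor_le_exp[OF \<open>L > 0\<close> \<open>n \<ge> 1\<close>] by blast
  moreover have "real (2 * n + 1) < exp (real n * L / 2)"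
    using double_plus_one_lt_exp \<open>L > 0\<close> assms(2) by (simp add: L_def)
  ultimately have "interpolation_loss n U < exp (real n * L / 2) * exp (real n * L / 2)"
    unfolding interpolation_loss_def mult.assoc times_divide_eq_right[symmetric]
    by (intro mult_less_le_imp_less) auto
  also have "\<dots> = r ^ n"
    using assms(1) by (simp add: L_def exp_of_nat_mult flip: exp_add)
  finally show ?thesis .
qed

lemma two_pi_div_le_grid_arc:
  fixes q m :: nat
  assumes "q \<ge> 2" "m > 0"
  shows "2 * pi / real q \<le> (real (m div (q - 1)) + 1) * (2 * pi / real (m + m div (q - 1)))"
proof -
  define U where "U = m div (q - 1)"
  have "m = (q - 1) * U + m mod (q - 1)" by (simp add: U_def)
  hence "m < (q - 1) * U + (q - 1)" using mod_less_divisor[of "q - 1" m] assms(1) by linarith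
  hence "m + U \<le> q * (U + 1)" using assms(1) by (simp add: algebra_simps diff_mult_distrib)
  hence "real (m + U) \<le> real q * (real U + 1)"
    using of_nat_mono[OF \<open>m + U \<le> q * (U + 1)\<close>, where 'a = real] by (simp add: algebra_simps)
  hence "2 * pi * real (m + U) \<le> 2 * pi * (real q * (real U + 1))" by (intro mult_left_mono) auto
  moreover have "real q > 0" "real (m + U) > 0" using assms by auto
  ultimately show ?thesis by (simp add: field_simps U_def)
qed

lemma emeasure_sublevel_le:
  fixes Q :: "real poly" and r b :: real
  assumes "r > 1" "48 < real n * (ln r) ^ 2" "b > 0" "degree Q \<le> n"
    and "z0 \<in> {-1..1}" "\<bar>poly Q z0\<bar> = (r * b) ^ n"
  shows "emeasure lebesgue {\<theta>\<in>{0<..<pi}. \<bar>poly Q (cos \<theta>)\<bar> < b ^ n} \<le> ennreal (pi - pi / oversampling r)"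
proof -
  define q where "q = oversampling r"
  define U where "U = (2 * n + 1) div (q - 1)"
  define E where "E = {\<theta>\<in>{0<..<pi}. \<bar>poly Q (cos \<theta>)\<bar> < b ^ n}"
  have "interpolation_loss n U < r ^ n"
    using interpolation_loss_lt_pow[OF assms(1,2)] by (simp add: U_def q_def)
  hence "interpolation_loss n U * b ^ n < \<bar>poly Q z0\<bar>"
    using assms(3) by (simp add: assms(6) power_mult_distrib)
  hence "\<not> measure lborel {\<phi>\<in>{0..<2*pi}. b ^ n \<le> \<bar>poly Q (cos \<phi>)\<bar>}
           < (real U + 1) * (2 * pi / real (2 * n + 1 + U))"
    using abs_poly_le_interpolation_loss[OF assms(4) _ assms(5)] by fastforce
  moreover have "2 * pi / real q \<le> (real U + 1) * (2 * pi / real (2 * n + 1 + U))"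
    using two_pi_div_le_grid_arc[of q "2 * n + 1"] oversampling_ge_four[of r] by (simp add: U_def q_def)
  moreover have "(\<lambda>x. \<bar>poly Q x\<bar>) \<in> borel_measurable borel" by measurable
  ultimately have "measure lborel E \<le> pi - pi / q"
    using measure_cos_sublevel_le[of "\<lambda>x. \<bar>poly Q x\<bar>" "b ^ n"] by (simp add: E_def)
  moreover have "E \<in> sets borel" unfolding E_def by measurable
  moreover have "E \<subseteq> {0..pi}" by (auto simp: E_def)
  ultimately have "emeasure lebesgue E = ennreal (measure lborel E)" "measure lborel E \<le> pi - pi / q"
    using emeasure_eq_measure2[OF fmeasurable_subset_Icc] by auto
  thus ?thesis by (simp add: E_def q_def ennreal_leI)
qed

theorem theorem8:
  fixes r :: real
  assumes "r > 1"
  shows "\<exists>n0::nat. \<forall>a b :: real. 0 < b \<and> a = r * b \<longrightarrow>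
           (\<exists>c. c < pi \<and>
              (\<forall>n::nat. n > n0 \<longrightarrow>
                 (\<forall>Q :: real poly. degree Q = n \<and>
                     (\<exists>z0\<in>{-1..1}. \<bar>poly Q z0\<bar> = a ^ n) \<longrightarrow>
                   emeasure lebesgue {\<theta>\<in>{0<..<pi}. \<bar>poly Q (cos \<theta>)\<bar> < b ^ n}
                     \<le> ennreal c)))"
proof (intro exI[of _ "nat \<lceil>48 / (ln r) ^ 2\<rceil>"] allI impI)
  fix a b :: real
  assume ab: "0 < b \<and> a = r * b"
  have "0 < ln r" using assms by simp
  show "\<exists>c. c < pi \<and> (\<forall>n. nat \<lceil>48 / (ln r) ^ 2\<rceil> < n \<longrightarrow> (\<forall>Q :: real poly. degree Q = n \<and>
          (\<exists>z0\<in>{-1..1}. \<bar>poly Q z0\<bar> = a ^ n) \<longrightarrow>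
          emeasure lebesgue {\<theta>\<in>{0<..<pi}. \<bar>poly Q (cos \<theta>)\<bar> < b ^ n} \<le> ennreal c))"
  proof (intro exI[of _ "pi - pi / oversampling r"] conjI allI impI)
    show "pi - pi / oversampling r < pi" using oversampling_ge_four[of r] by simp
    fix n :: nat and Q :: "real poly"
    assume n: "nat \<lceil>48 / (ln r) ^ 2\<rceil> < n"
      and Q: "degree Q = n \<and> (\<exists>z0\<in>{-1..1}. \<bar>poly Q z0\<bar> = a ^ n)"
    have "48 / (ln r) ^ 2 \<le> real (nat \<lceil>48 / (ln r) ^ 2\<rceil>)" by linarith
    also have "\<dots> < real n" using n by simp
    finally have "48 < real n * (ln r) ^ 2" using \<open>0 < ln r\<close> by (simp add: divide_less_eq)
    moreover obtain z0 where "z0 \<in> {-1..1}" "\<bar>poly Q z0\<bar> = (r * b) ^ n" using Q ab by auto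
    moreover have "b > 0" "degree Q \<le> n" using ab Q by simp_all
    ultimately show "emeasure lebesgue {\<theta>\<in>{0<..<pi}. \<bar>poly Q (cos \<theta>)\<bar> < b ^ n}
                     \<le> ennreal (pi - pi / oversampling r)"
      using emeasure_sublevel_le[OF assms] by blast
  qed
qed

end
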